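(* Let $k:\mathbb{R}\to\mathbb{R}$ be a nonnegative kernel that is symmetric, i.e. $k(-z)=k(z)$ for all $z$, with $E(k(\epsilon_1))<\infty$ and $E(|\epsilon_1|^2 k^r(\epsilon_1))<\infty$ for $r=1,2$. Let $n\ge 2$, $m\in\mathbb{R}$, and let $Y_i=m+\epsilon_i$, $i=1,\dots,n$, where $\epsilon_1,\dots,\epsilon_n$ are i.i.d., symmetrically distributed around $0$ (i.e. $\epsilon_1\stackrel{d}{=}-\epsilon_1$) with finite second moment. For $i=1,\dots,n$ define the vertically weighted average \[ \widehat{\mu}_n(Y_i)=\frac{\sum_{j\ne i} Y_j\,k(Y_j-Y_i)}{\sum_{j\ne i} k(Y_j-Y_i)}, \] the sums running over $j\in\{1,\dots,n\}\setminus\{i\}$. Then $\mathrm{Med}(\widehat{\mu}_n(Y_i))=m$ for every $i=1,\dots,n$.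
   Context: $\mathrm{Med}$ denotes the median of a random variable; $\stackrel{d}{=}$ denotes equality in distribution. In particular $\widehat{\mu}_n(Y_n)=\sum_{j\le n-1}Y_j k(Y_j-Y_n)/\sum_{j\le n-1}k(Y_j-Y_n)$.
   Formalization: Every denominator $\sum_{j\ne i} k(Y_j-Y_i)$ is almost surely nonzero, and $\mathrm{Med}(\widehat{\mu}_n(Y_i))=m$ means that m is a median: $P(\widehat{\mu}_n(Y_i)\le m)\ge 1/2$ and $P(\widehat{\mu}_n(Y_i)\ge m)\ge 1/2$. Apart from conventions, each condition added here is assumed in the paper as well or is needed for the statement above to hold. *)

theory Defs
  imports "HOL-Probability.Probability"
begin

definition is_median :: "'a measure \<Rightarrow> ('a \<Rightarrow> real) \<Rightarrow> real \<Rightarrow> bool" where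
  "is_median M X c \<longleftrightarrow>
     measure M {\<omega> \<in> space M. X \<omega> \<le> c} \<ge> 1/2 \<and>
     measure M {\<omega> \<in> space M. X \<omega> \<ge> c} \<ge> 1/2"

definition vwa :: "(real \<Rightarrow> real) \<Rightarrow> (nat \<Rightarrow> 'a \<Rightarrow> real) \<Rightarrow> nat \<Rightarrow> nat \<Rightarrow> 'a \<Rightarrow> real" where
  "vwa k Y n i \<omega> =
     (\<Sum>j\<in>{1..n}-{i}. Y j \<omega> * k (Y j \<omega> - Y i \<omega>)) /
     (\<Sum>j\<in>{1..n}-{i}. k (Y j \<omega> - Y i \<omega>))"

end

theory Submission
  imports Defs
begin

text \<open>Only symmetry matters: the noise vector has the same joint distribution as its negation,
  and the vertically weighted average of the centred observations is an odd function of that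
  vector, so it is symmetric about 0 and has 0 as a median; shifting by \<open>m\<close> gives the claim.\<close>

lemma distr_comp_cong:
  assumes "X \<in> measurable M N" "Y \<in> measurable M N" "distr M N X = distr M N Y"
    and "f \<in> measurable N L"
  shows "distr M L (\<lambda>\<omega>. f (X \<omega>)) = distr M L (\<lambda>\<omega>. f (Y \<omega>))"
proof -
  have "distr M L (\<lambda>\<omega>. f (X \<omega>)) = distr (distr M N X) L f"
    by (simp add: distr_distr[OF assms(4,1)] comp_def)
  also have "\<dots> = distr (distr M N Y) L f"
    by (simp only: assms(3))
  also have "\<dots> = distr M L (\<lambda>\<omega>. f (Y \<omega>))"
    by (simp add: distr_distr[OF assms(4,2)] comp_def)
  finally show ?thesis .
qed

lemma (in prob_space) is_median_zero_if_symmetric_distr: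
  assumes X: "X \<in> borel_measurable M"
    and sym: "distr M borel (\<lambda>\<omega>. - X \<omega>) = distr M borel X"
  shows "is_median M X 0"
proof -
  let ?le = "{\<omega> \<in> space M. X \<omega> \<le> 0}" and ?ge = "{\<omega> \<in> space M. X \<omega> \<ge> 0}"
  have "prob ?le = measure (distr M borel (\<lambda>\<omega>. - X \<omega>)) {x. x \<ge> 0}"
    using X by (subst measure_distr) (auto intro: arg_cong[where f = prob])
  also have "\<dots> = measure (distr M borel X) {x. x \<ge> 0}"
    by (simp only: sym)
  also have "\<dots> = prob ?ge"
    using X by (subst measure_distr) (auto intro: arg_cong[where f = prob])
  finally have le_ge: "prob ?le = prob ?ge" .
  have "1 = prob (?le \<union> ?ge)"
    by (subst prob_space[symmetric]) (auto intro!: arg_cong[where f = prob])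
  also have "\<dots> \<le> prob ?le + prob ?ge"
    using X by (intro measure_subadditive) auto
  finally show ?thesis
    using le_ge unfolding is_median_def by linarith
qed

lemma is_median_AE_shift:
  assumes "is_median M X c" and "AE \<omega> in M. Y \<omega> = a + X \<omega>"
    and "X \<in> borel_measurable M" "Y \<in> borel_measurable M"
  shows "is_median M Y (a + c)"
proof -
  have "measure M {\<omega> \<in> space M. Y \<omega> \<le> a + c} = measure M {\<omega> \<in> space M. X \<omega> \<le> c}"
    "measure M {\<omega> \<in> space M. Y \<omega> \<ge> a + c} = measure M {\<omega> \<in> space M. X \<omega> \<ge> c}"
    using assms(2-4) by (auto intro!: measure_eq_AE)
  then show ?thesis
    using assms(1) unfolding is_median_def by simp
qed

lemma (in prob_space) indep_vars_symmetric_joint_distr: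
  fixes X :: "'i \<Rightarrow> 'a \<Rightarrow> real"
  assumes "I \<noteq> {}" and indep: "indep_vars (\<lambda>_. borel) X I"
    and rv: "\<And>j. j \<in> I \<Longrightarrow> X j \<in> borel_measurable M"
    and sym: "\<And>j. j \<in> I \<Longrightarrow> distr M borel (\<lambda>\<omega>. - X j \<omega>) = distr M borel (X j)"
  shows "distr M (\<Pi>\<^sub>M j\<in>I. borel) (\<lambda>\<omega>. \<lambda>j\<in>I. - X j \<omega>) =
         distr M (\<Pi>\<^sub>M j\<in>I. borel) (\<lambda>\<omega>. \<lambda>j\<in>I. X j \<omega>)"
proof -
  have "indep_vars (\<lambda>_. borel) (\<lambda>j \<omega>. - X j \<omega>) I"
    using indep by (rule indep_vars_compose2) simp
  then have "distr M (\<Pi>\<^sub>M j\<in>I. borel) (\<lambda>\<omega>. \<lambda>j\<in>I. - X j \<omega>) =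
             (\<Pi>\<^sub>M j\<in>I. distr M borel (\<lambda>\<omega>. - X j \<omega>))"
    using indep_vars_iff_distr_eq_PiM'[OF \<open>I \<noteq> {}\<close>, where M' = "\<lambda>_. borel" and X = "\<lambda>j \<omega>. - X j \<omega>"] rv
    by simp
  also have "\<dots> = (\<Pi>\<^sub>M j\<in>I. distr M borel (X j))"
    by (rule PiM_cong) (simp_all add: sym)
  also have "\<dots> = distr M (\<Pi>\<^sub>M j\<in>I. borel) (\<lambda>\<omega>. \<lambda>j\<in>I. X j \<omega>)"
    using indep_vars_iff_distr_eq_PiM'[OF \<open>I \<noteq> {}\<close>, where M' = "\<lambda>_. borel" and X = X] rv indep
    by simp
  finally show ?thesis .
qed

lemma distr_odd_functional_symmetric:
  fixes X :: "'i \<Rightarrow> 'a \<Rightarrow> real"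
  assumes rv: "\<And>j. j \<in> I \<Longrightarrow> X j \<in> borel_measurable M"
    and sym: "distr M (\<Pi>\<^sub>M j\<in>I. borel) (\<lambda>\<omega>. \<lambda>j\<in>I. - X j \<omega>) =
              distr M (\<Pi>\<^sub>M j\<in>I. borel) (\<lambda>\<omega>. \<lambda>j\<in>I. X j \<omega>)"
    and f: "f \<in> borel_measurable (\<Pi>\<^sub>M j\<in>I. borel)"
    and odd: "\<And>\<omega>. f (\<lambda>j\<in>I. - X j \<omega>) = - f (\<lambda>j\<in>I. X j \<omega>)"
  shows "distr M borel (\<lambda>\<omega>. - f (\<lambda>j\<in>I. X j \<omega>)) = distr M borel (\<lambda>\<omega>. f (\<lambda>j\<in>I. X j \<omega>))"
proof -
  have "(\<lambda>\<omega>. \<lambda>j\<in>I. X j \<omega>) \<in> measurable M (\<Pi>\<^sub>M j\<in>I. borel)"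
    "(\<lambda>\<omega>. \<lambda>j\<in>I. - X j \<omega>) \<in> measurable M (\<Pi>\<^sub>M j\<in>I. borel)"
    using rv by (auto intro!: measurable_restrict)
  from distr_comp_cong[OF this(2,1) sym f] show ?thesis
    by (simp add: odd)
qed

lemma vwa_uminus:
  assumes "\<And>z. k (- z) = k z"
  shows "vwa k (\<lambda>j \<omega>. - Y j \<omega>) n i \<omega> = - vwa k Y n i \<omega>"
proof -
  have "k (- Y j \<omega> - - Y i \<omega>) = k (Y j \<omega> - Y i \<omega>)" for j
    using assms[of "Y j \<omega> - Y i \<omega>"] by simp
  then show ?thesis
    unfolding vwa_def by (simp add: sum_negf)
qed

lemma vwa_add_const:
  assumes "(\<Sum>j\<in>{1..n}-{i}. k (Y j \<omega> - Y i \<omega>)) \<noteq> 0"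
  shows "vwa k (\<lambda>j \<omega>. a + Y j \<omega>) n i \<omega> = a + vwa k Y n i \<omega>"
proof -
  have "(\<Sum>j\<in>{1..n}-{i}. (a + Y j \<omega>) * k (Y j \<omega> - Y i \<omega>)) =
        a * (\<Sum>j\<in>{1..n}-{i}. k (Y j \<omega> - Y i \<omega>)) + (\<Sum>j\<in>{1..n}-{i}. Y j \<omega> * k (Y j \<omega> - Y i \<omega>))"
    by (simp add: distrib_right sum.distrib sum_distrib_left)
  then show ?thesis
    using assms unfolding vwa_def by (simp add: add_divide_distrib)
qed

lemma vwa_restrict:
  assumes "i \<in> {1..n}"
  shows "vwa k (\<lambda>j x. x j) n i (\<lambda>j\<in>{1..n}. Y j \<omega>) = vwa k Y n i \<omega>"
  using assms unfolding vwa_def by (intro arg_cong2[where f = "(/)"] sum.cong) auto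

lemma (in prob_space) vwa_symmetric_distr:
  fixes X :: "nat \<Rightarrow> 'a \<Rightarrow> real"
  assumes i: "i \<in> {1..n}" and k_meas: "k \<in> borel_measurable borel"
    and k_sym: "\<And>z. k (- z) = k z"
    and rv: "\<And>j. j \<in> {1..n} \<Longrightarrow> X j \<in> borel_measurable M"
    and indep: "indep_vars (\<lambda>_. borel) X {1..n}"
    and sym: "\<And>j. j \<in> {1..n} \<Longrightarrow> distr M borel (\<lambda>\<omega>. - X j \<omega>) = distr M borel (X j)"
  shows "distr M borel (\<lambda>\<omega>. - vwa k X n i \<omega>) = distr M borel (vwa k X n i)"
proof -
  have joint_sym: "distr M (\<Pi>\<^sub>M j\<in>{1..n}. borel) (\<lambda>\<omega>. \<lambda>j\<in>{1..n}. - X j \<omega>) =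
                   distr M (\<Pi>\<^sub>M j\<in>{1..n}. borel) (\<lambda>\<omega>. \<lambda>j\<in>{1..n}. X j \<omega>)"
    using i indep rv sym by (intro indep_vars_symmetric_joint_distr) auto
  have f_meas: "vwa k (\<lambda>j x. x j) n i \<in> borel_measurable (\<Pi>\<^sub>M j\<in>{1..n}. borel)"
    unfolding vwa_def using i k_meas by measurable
  have odd: "vwa k (\<lambda>j x. x j) n i (\<lambda>j\<in>{1..n}. - X j \<omega>) =
             - vwa k (\<lambda>j x. x j) n i (\<lambda>j\<in>{1..n}. X j \<omega>)" for \<omega>
    using vwa_restrict[OF i, where Y = "\<lambda>j \<omega>. - X j \<omega>"] vwa_uminus[where k = k, OF k_sym]
    by (simp only: vwa_restrict[OF i])
  show ?thesis
    using distr_odd_functional_symmetric[OF rv joint_sym f_meas odd]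
    by (simp only: vwa_restrict[OF i])
qed

theorem theorem2:
  fixes M :: "'a measure" and eps :: "nat \<Rightarrow> 'a \<Rightarrow> real" and k :: "real \<Rightarrow> real"
    and n :: nat and m :: real
  assumes "prob_space M"
    and "n \<ge> 2"
    and k_meas: "k \<in> borel_measurable borel"
    and k_nonneg: "\<And>z. k z \<ge> 0"
    and k_sym: "\<And>z. k (- z) = k z"
    and rv: "\<And>i. i \<in> {1..n} \<Longrightarrow> eps i \<in> borel_measurable M"
    and indep: "prob_space.indep_vars M (\<lambda>_. borel) eps {1..n}"
    and ident: "\<And>i. i \<in> {1..n} \<Longrightarrow> distr M borel (eps i) = distr M borel (eps 1)"
    and symm: "distr M borel (\<lambda>\<omega>. - eps 1 \<omega>) = distr M borel (eps 1)"
    and second_moment: "integrable M (\<lambda>\<omega>. (eps 1 \<omega>)^2)"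
    and k_int: "integrable M (\<lambda>\<omega>. k (eps 1 \<omega>))"
    and k_mom1: "integrable M (\<lambda>\<omega>. \<bar>eps 1 \<omega>\<bar>^2 * k (eps 1 \<omega>))"
    and k_mom2: "integrable M (\<lambda>\<omega>. \<bar>eps 1 \<omega>\<bar>^2 * (k (eps 1 \<omega>))^2)"
    and denom_pos: "AE \<omega> in M. \<forall>i\<in>{1..n}.
          (\<Sum>j\<in>{1..n}-{i}. k ((m + eps j \<omega>) - (m + eps i \<omega>))) \<noteq> 0"
  shows "\<forall>i\<in>{1..n}. is_median M (vwa k (\<lambda>j \<omega>. m + eps j \<omega>) n i) m"
proof
  fix i assume i: "i \<in> {1..n}"
  interpret prob_space M by fact
  note k_meas[measurable] rv[measurable]
  have one: "1 \<in> {1..n}" using \<open>n \<ge> 2\<close> by simp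
  have "distr M borel (\<lambda>\<omega>. - eps j \<omega>) = distr M borel (eps j)" if j: "j \<in> {1..n}" for j
  proof -
    have "distr M borel (\<lambda>\<omega>. - eps j \<omega>) = distr M borel (\<lambda>\<omega>. - eps 1 \<omega>)"
      by (rule distr_comp_cong[OF rv[OF j] rv[OF one] ident[OF j]]) simp
    also have "\<dots> = distr M borel (eps j)"
      unfolding symm ident[OF j] ..
    finally show ?thesis .
  qed
  then have "distr M borel (\<lambda>\<omega>. - vwa k eps n i \<omega>) = distr M borel (vwa k eps n i)"
    by (intro vwa_symmetric_distr[OF i k_meas k_sym rv indep])
  moreover have avg_meas: "vwa k eps n i \<in> borel_measurable M"
    unfolding vwa_def using i by measurable
  ultimately have "is_median M (vwa k eps n i) 0"
    by (intro is_median_zero_if_symmetric_distr)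
  moreover have "vwa k (\<lambda>j \<omega>. m + eps j \<omega>) n i \<in> borel_measurable M"
    unfolding vwa_def using i by measurable
  moreover have "AE \<omega> in M. vwa k (\<lambda>j \<omega>. m + eps j \<omega>) n i \<omega> = m + vwa k eps n i \<omega>"
    using denom_pos by eventually_elim (use i in \<open>simp add: vwa_add_const\<close>)
  ultimately show "is_median M (vwa k (\<lambda>j \<omega>. m + eps j \<omega>) n i) m"
    using is_median_AE_shift[where a = m and c = 0] avg_meas by simp
qed

end
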